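(* Let $A$ be a bivariate copula and $K_A$ a version of its Markov kernel such that the function $(x,y)\mapsto K_A(x,[0,y])$ on $[0,1]^2$ has a discontinuity. Then the sequence $(\Delta_N)_{N\in\mathbb{N}}$ given by $$\Delta_N:=\sup_{(x,y)\in[0,1]^2}\left|K_{\mathcal{B}_N(A)}(x,[0,y])-K_A(x,[0,y])\right|$$ does not converge to $0$ as $N\to\infty$.
   Context: A (bivariate) copula is a distribution function on $[0,1]^2$ with uniform marginals; each copula $B$ corresponds to a doubly stochastic measure $\mu_B$ with $B(x,y)=\mu_B([0,x]\times[0,y])$. A Markov kernel of $B$ is a map $K_B:[0,1]\times\mathcal{B}([0,1])\to[0,1]$, measurable in the first argument, a probability measure in the second, with $\int_{E_1}K_B(x,E_2)\,d\lambda(x)=\mu_B(E_1\times E_2)$ for all Borel $E_1,E_2$ ($\lambda$ = Lebesgue measure). Bernstein approximation: $p_{N,k}(u)=\binom Nk u^k(1-u)^{N-k}$ for $k\in\{0,\dots,N\}$ and $p_{N,k}\equiv0$ otherwise; $\mathcal{B}_N(A)(x,y)=\sum_{i,j=1}^N A(\tfrac iN,\tfrac jN)p_{N,i}(x)p_{N,j}(y)$, with Markov kernel version $K_{\mathcal{B}_N(A)}(x,[0,y])=N\sum_{i,j=1}^N A(\tfrac iN,\tfrac jN)\big(p_{N-1,i-1}(x)-p_{N-1,i}(x)\big)p_{N,j}(y)$. *)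

theory Defs
  imports "HOL-Probability.Probability"
begin

definition is_copula :: "(real \<Rightarrow> real \<Rightarrow> real) \<Rightarrow> bool" where
  "is_copula A \<longleftrightarrow>
     (\<forall>x\<in>{0..1}. A x 0 = 0 \<and> A 0 x = 0 \<and> A x 1 = x \<and> A 1 x = x) \<and>
     (\<forall>x1\<in>{0..1}. \<forall>x2\<in>{0..1}. \<forall>y1\<in>{0..1}. \<forall>y2\<in>{0..1}.
        x1 \<le> x2 \<longrightarrow> y1 \<le> y2 \<longrightarrow> A x2 y2 - A x1 y2 - A x2 y1 + A x1 y1 \<ge> 0)"

abbreviation unit_borel :: "real measure" where
  "unit_borel \<equiv> restrict_space borel {0..1}"

definition is_measure_of_copula :: "(real \<Rightarrow> real \<Rightarrow> real) \<Rightarrow> (real \<times> real) measure \<Rightarrow> bool" where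
  "is_measure_of_copula A \<mu> \<longleftrightarrow>
     sets \<mu> = sets (restrict_space borel ({0..1} \<times> {0..1})) \<and>
     (\<forall>x\<in>{0..1}. \<forall>y\<in>{0..1}. emeasure \<mu> ({0..x} \<times> {0..y}) = ennreal (A x y))"

definition is_markov_kernel_of :: "(real \<Rightarrow> real \<Rightarrow> real) \<Rightarrow> (real \<Rightarrow> real set \<Rightarrow> real) \<Rightarrow> bool" where
  "is_markov_kernel_of A K \<longleftrightarrow>
     (\<forall>x\<in>{0..1}. \<exists>P. prob_space P \<and> sets P = sets unit_borel \<and>
                       (\<forall>E\<in>sets unit_borel. K x E = measure P E)) \<and>
     (\<forall>E\<in>sets unit_borel. (\<lambda>x. K x E) \<in> borel_measurable unit_borel) \<and>
     (\<exists>\<mu>. is_measure_of_copula A \<mu> \<and>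
        (\<forall>E1\<in>sets unit_borel. \<forall>E2\<in>sets unit_borel.
           (LINT x:E1|lborel. K x E2) = measure \<mu> (E1 \<times> E2)))"

definition bern :: "nat \<Rightarrow> nat \<Rightarrow> real \<Rightarrow> real" where
  "bern N k u = (if k \<le> N then real (N choose k) * u ^ k * (1 - u) ^ (N - k) else 0)"

text \<open>Markov kernel K_{B_N(A)}(x,[0,y]) of the Bernstein approximation.\<close>
definition bernstein_kernel :: "(real \<Rightarrow> real \<Rightarrow> real) \<Rightarrow> nat \<Rightarrow> real \<Rightarrow> real \<Rightarrow> real" where
  "bernstein_kernel A N x y =
     real N * (\<Sum>i=1..N. \<Sum>j=1..N. A (real i / real N) (real j / real N) *
        (bern (N - 1) (i - 1) x - bern (N - 1) i x) * bern N j y)"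

end

theory Submission
  imports Defs
begin

text \<open>Each Bernstein kernel is a polynomial in (x, y), hence continuous on the unit square, and a
  uniform limit of continuous functions is continuous. So if the sup-distances to
  (x, y) \<mapsto> K(x, [0, y]) tended to 0, this function would be continuous. The bound
  0 \<le> K(x, [0, y]) \<le> 1 is needed to make these suprema genuine (the supremum of an
  unbounded set of reals is a junk value); that A is a copula plays no role.\<close>

lemma continuous_on_bern [continuous_intros]:
  "continuous_on S f \<Longrightarrow> continuous_on S (\<lambda>p. bern n k (f p))"
  unfolding bern_def by (cases "k \<le> n") (auto intro!: continuous_intros)

lemma continuous_on_bernstein_kernel:
  "continuous_on S (\<lambda>(x, y). bernstein_kernel A N x y)"
  unfolding case_prod_beta bernstein_kernel_def
  by (intro continuous_intros)

lemma atLeastAtMost_in_unit_borel: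
  fixes y :: real
  assumes "y \<le> 1"
  shows "{0..y} \<in> sets unit_borel"
proof -
  have "{0..y} = {0..1} \<inter> {0..y}" using assms by auto
  then show ?thesis
    unfolding sets_restrict_space by (metis atLeastAtMost_borel image_eqI)
qed

lemma markov_kernel_of_bounds:
  assumes "is_markov_kernel_of A K" "x \<in> {0..1}" "E \<in> sets unit_borel"
  shows "0 \<le> K x E" "K x E \<le> 1"
proof -
  obtain P where P: "prob_space P" "K x E = measure P E"
    using assms unfolding is_markov_kernel_of_def by blast
  then show "0 \<le> K x E" "K x E \<le> 1"
    by (simp_all add: prob_space.prob_le_1)
qed

lemma bounded_markov_kernel_cdf:
  assumes "is_markov_kernel_of A K"
  shows "bounded ((\<lambda>(x, y). K x {0..y}) ` ({0..1} \<times> {0..1}))"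
proof -
  have "\<bar>K x {0..y}\<bar> \<le> 1" if "x \<in> {0..1}" "y \<in> {0..1}" for x y
    using markov_kernel_of_bounds[OF assms that(1) atLeastAtMost_in_unit_borel] that(2)
    by auto
  then show ?thesis
    unfolding bounded_iff by (intro exI[of _ 1]) auto
qed

lemma uniform_limit_SUP_dist:
  fixes f :: "'i \<Rightarrow> 'a \<Rightarrow> 'b::metric_space"
  assumes "\<And>n. bounded ((\<lambda>x. dist (f n x) (g x)) ` S)"
    and "((\<lambda>n. SUP x\<in>S. dist (f n x) (g x)) \<longlongrightarrow> 0) F"
  shows "uniform_limit S f g F"
proof (rule uniform_limitI)
  fix e :: real
  assume "e > 0"
  with assms(2) have "\<forall>\<^sub>F n in F. (SUP x\<in>S. dist (f n x) (g x)) < e"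
    by (rule order_tendstoD)
  then show "\<forall>\<^sub>F n in F. \<forall>x\<in>S. dist (f n x) (g x) < e"
  proof (rule eventually_mono, intro ballI)
    fix n x
    assume "(SUP x\<in>S. dist (f n x) (g x)) < e" "x \<in> S"
    moreover have "dist (f n x) (g x) \<le> (SUP x\<in>S. dist (f n x) (g x))"
      using \<open>x \<in> S\<close> assms(1) by (intro cSUP_upper bounded_imp_bdd_above)
    ultimately show "dist (f n x) (g x) < e" by linarith
  qed
qed

lemma continuous_on_SUP_dist_limit:
  fixes f :: "'i \<Rightarrow> 'a::topological_space \<Rightarrow> 'b::metric_space"
  assumes "compact S" "\<And>n. continuous_on S (f n)" "bounded (g ` S)" "\<not> trivial_limit F"
    and "((\<lambda>n. SUP x\<in>S. dist (f n x) (g x)) \<longlongrightarrow> 0) F"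
  shows "continuous_on S g"
proof (rule uniform_limit_theorem)
  have "bounded ((\<lambda>x. dist (f n x) (g x)) ` S)" for n
    using compact_imp_bounded[OF compact_continuous_image[OF assms(2,1)]] assms(3)
    by (rule bounded_dist_comp)
  then show "uniform_limit S f g F"
    using assms(5) by (rule uniform_limit_SUP_dist)
qed (use assms in auto)

theorem proposition4p4:
  fixes A :: "real \<Rightarrow> real \<Rightarrow> real" and K :: "real \<Rightarrow> real set \<Rightarrow> real"
  assumes "is_copula A"
    and "is_markov_kernel_of A K"
    and "\<not> continuous_on ({0..1} \<times> {0..1}) (\<lambda>(x, y). K x {0..y})"
  shows "\<not> ((\<lambda>N. SUP (x, y)\<in>{0..1} \<times> {0..1}. \<bar>bernstein_kernel A N x y - K x {0..y}\<bar>)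
            \<longlonglongrightarrow> 0)"
proof
  let ?B = "\<lambda>N (x, y). bernstein_kernel A N x y"
  let ?K = "\<lambda>(x, y). K x {0..y}"
  assume "(\<lambda>N. SUP (x, y)\<in>{0..1} \<times> {0..1}. \<bar>bernstein_kernel A N x y - K x {0..y}\<bar>)
            \<longlonglongrightarrow> 0"
  then have lim: "(\<lambda>N. SUP p\<in>{0..1} \<times> {0..1}. dist (?B N p) (?K p)) \<longlonglongrightarrow> 0"
    by (simp add: dist_real_def case_prod_beta)
  have "continuous_on ({0..1} \<times> {0..1}) ?K"
    using compact_Times[OF compact_Icc compact_Icc] continuous_on_bernstein_kernel
      bounded_markov_kernel_cdf[OF assms(2)] trivial_limit_sequentially lim
    by (rule continuous_on_SUP_dist_limit[where f = ?B])
  with assms(3) show False by simp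
qed

end
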